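(* Let $s\in\{+1,-1\}$ and let $(X,d,\lambda)$ be an admissible space, with orthonormal basis $\{\varphi_n\}_{n\in\mathbb N}$ of $L^2(X)$ and point $\mathfrak o\in X$ as in the definition of admissibility. Then for every nonzero $f\in\mathcal A_s(X)$, $$\lambda(\{x\in X: f(x)<0\})\sum_{n\ge 0:\ s\widehat f(n)<0}\|\varphi_n\|_{L^\infty(X)}^2\ \ge\ \frac1{16}.$$ In particular, $$\lambda\big(B(\mathfrak o, r(f;X))\big)\sum_{n=0}^{k(s\widehat f)-1}\|\varphi_n\|_{L^\infty(X)}^2\ \ge\ \frac1{16}.$$
   Context: $(X,d,\lambda)$ is a metric measure space with distance $d$ and probability measure $\lambda$; $L^2(X)$ denotes square-integrable real-valued functions; $B(x,r)=\{y\in X: d(x,y)\le r\}$; $\mathbb N=\{0,1,2,\dots\}$. The space is admissible if there exist an orthonormal basis $\{\varphi_n:X\to\mathbb R\}_{n\in\mathbb N}$ of $L^2(X)$ and a point $\mathfrak o\in X$ such that $\varphi_0\equiv1$ and, for every $n$, $\varphi_n(\mathfrak o):=\lim_{r\to0^+}\frac{1}{\lambda(B(\mathfrak o,r))}\int_{B(\mathfrak o,r)}\varphi_n\,d\lambda$ exists and equals $\|\varphi_n\|_{L^\infty(X)}<\infty$. For $f\in L^2(X)$ write $\widehat f(n)=\int_X f\varphi_n\,d\lambda$. For $s\in\{+1,-1\}$, $\mathcal A_s(X)$ is the set of real-valued $f\in L^2(X)$ such that $\sum_{n}|\widehat f(n)|\,\|\varphi_n\|_{L^\infty(X)}<\infty$,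 $\widehat f(0)\le 0$, the sequence $\{s\widehat f(n)\}_n$ is eventually nonnegative, and $sf(\mathfrak o)\le 0$, where $f(\mathfrak o):=\sum_n\widehat f(n)\varphi_n(\mathfrak o)$. Write $r_1\sim r_2$ if $\lambda(B(\mathfrak o,r_1))=\lambda(B(\mathfrak o,r_2))$; let $\mathcal R$ be the set of infima of the equivalence classes of $[0,\infty)$ under $\sim$. Define $r(f;X)=\inf\{r\in\mathcal R: f(x)\ge0\text{ for }\lambda\text{-a.e. }x\text{ with }d(x,\mathfrak o)\ge r\}$ and $k(s\widehat f)=\min\{k\ge1: s\widehat f(n)\ge0\text{ for all }n\ge k\}$. *)

theory Defs
  imports "HOL-Probability.Probability"
begin

definition linf_norm_e :: "'a measure \<Rightarrow> ('a \<Rightarrow> real) \<Rightarrow> ereal" where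
  "linf_norm_e M g = esssup M (\<lambda>x. ereal \<bar>g x\<bar>)"

definition linf_norm :: "'a measure \<Rightarrow> ('a \<Rightarrow> real) \<Rightarrow> real" where
  "linf_norm M g = real_of_ereal (linf_norm_e M g)"

definition L2 :: "'a measure \<Rightarrow> ('a \<Rightarrow> real) set" where
  "L2 M = {f. f \<in> borel_measurable M \<and> integrable M (\<lambda>x. (f x)\<^sup>2)}"

definition fcoef :: "'a measure \<Rightarrow> (nat \<Rightarrow> 'a \<Rightarrow> real) \<Rightarrow> ('a \<Rightarrow> real) \<Rightarrow> nat \<Rightarrow> real" where
  "fcoef M \<phi> f n = (\<integral>x. f x * \<phi> n x \<partial>M)"

definition ONB :: "'a measure \<Rightarrow> (nat \<Rightarrow> 'a \<Rightarrow> real) \<Rightarrow> bool" where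
  "ONB M \<phi> \<longleftrightarrow>
     (\<forall>n. \<phi> n \<in> L2 M) \<and>
     (\<forall>n m. (\<integral>x. \<phi> n x * \<phi> m x \<partial>M) = (if n = m then 1 else 0)) \<and>
     (\<forall>f\<in>L2 M. (\<lambda>N. \<integral>x. (f x - (\<Sum>n<N. fcoef M \<phi> f n * \<phi> n x))\<^sup>2 \<partial>M)
                    \<longlonglongrightarrow> 0)"

definition ball_avg :: "'a::metric_space measure \<Rightarrow> 'a \<Rightarrow> ('a \<Rightarrow> real) \<Rightarrow> real \<Rightarrow> real" where
  "ball_avg M pt g r = (1 / measure M (cball pt r)) * (\<integral>x\<in>cball pt r. g x \<partial>M)"

definition val_at :: "'a::metric_space measure \<Rightarrow> 'a \<Rightarrow> ('a \<Rightarrow> real) \<Rightarrow> real" where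
  "val_at M pt g = Lim (at_right 0) (ball_avg M pt g)"

(* admissibility of (X,d,\<lambda>) with basis \<phi> and point pt; X is the whole type,
   \<lambda> = M a Borel probability measure *)
definition admissible :: "'a::metric_space measure \<Rightarrow> (nat \<Rightarrow> 'a \<Rightarrow> real) \<Rightarrow> 'a \<Rightarrow> bool" where
  "admissible M \<phi> pt \<longleftrightarrow>
     prob_space M \<and> sets M = sets borel \<and> ONB M \<phi> \<and>
     (AE x in M. \<phi> 0 x = 1) \<and>
     (\<forall>n. linf_norm_e M (\<phi> n) < \<infinity> \<and>
          (ball_avg M pt (\<phi> n) \<longlongrightarrow> linf_norm M (\<phi> n)) (at_right 0))"

definition fval_o :: "'a::metric_space measure \<Rightarrow> (nat \<Rightarrow> 'a \<Rightarrow> real) \<Rightarrow> 'a \<Rightarrow> ('a \<Rightarrow> real) \<Rightarrow> real" where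
  "fval_o M \<phi> pt f = (\<Sum>n. fcoef M \<phi> f n * val_at M pt (\<phi> n))"

definition A_s :: "real \<Rightarrow> 'a::metric_space measure \<Rightarrow> (nat \<Rightarrow> 'a \<Rightarrow> real) \<Rightarrow> 'a \<Rightarrow> ('a \<Rightarrow> real) set" where
  "A_s s M \<phi> pt = {f. f \<in> L2 M \<and>
       summable (\<lambda>n. \<bar>fcoef M \<phi> f n\<bar> * linf_norm M (\<phi> n)) \<and>
       fcoef M \<phi> f 0 \<le> 0 \<and>
       (\<forall>\<^sub>F n in sequentially. s * fcoef M \<phi> f n \<ge> 0) \<and>
       s * fval_o M \<phi> pt f \<le> 0}"

definition Rset :: "'a::metric_space measure \<Rightarrow> 'a \<Rightarrow> real set" where
  "Rset M pt = {Inf {r'. r' \<ge> 0 \<and> measure M (cball pt r') = measure M (cball pt r)} | r. r \<ge> 0}"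

(* r(f;X), as an extended real (inf of the empty set = \<infinity>) *)
definition r_f :: "'a::metric_space measure \<Rightarrow> 'a \<Rightarrow> ('a \<Rightarrow> real) \<Rightarrow> ereal" where
  "r_f M pt f = Inf {ereal r | r. r \<in> Rset M pt \<and> (AE x in M. dist x pt \<ge> r \<longrightarrow> f x \<ge> 0)}"

definition ball_meas :: "'a::metric_space measure \<Rightarrow> 'a \<Rightarrow> ereal \<Rightarrow> real" where
  "ball_meas M pt r = (if r = \<infinity> then measure M (space M) else measure M (cball pt (real_of_ereal r)))"

definition k_idx :: "(nat \<Rightarrow> real) \<Rightarrow> nat" where
  "k_idx a = (LEAST k. k \<ge> 1 \<and> (\<forall>n\<ge>k. a n \<ge> 0))"

end

theory Submission
  imports Defs
begin

text \<open>
  Write \<open>c\<^sub>n\<close> for the Fourier coefficients of \<open>f\<close>, \<open>L\<^sub>n = \<parallel>\<phi>\<^sub>n\<parallel>\<^sub>\<infinity>\<close>,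
  \<open>K = \<Sum> |c\<^sub>n| L\<^sub>n\<close>, \<open>N = {n. s c\<^sub>n < 0}\<close> and \<open>A = {f < 0}\<close>.
  The partial Fourier sums are bounded by \<open>K\<close> and converge to \<open>f\<close> in \<open>L\<^sup>2\<close>, so
  \<open>|f| \<le> K\<close> a.e. Since \<open>f(pt) = \<Sum> c\<^sub>n L\<^sub>n\<close> has sign \<open>-s\<close>, the terms with \<open>n \<in> N\<close>
  carry at least half of \<open>K\<close>, and \<open>|c\<^sub>n| \<le> \<parallel>f\<parallel>\<^sub>1 L\<^sub>n\<close>. Since \<open>\<integral> f = c\<^sub>0 \<le> 0\<close>,
  \<open>\<parallel>f\<parallel>\<^sub>1 \<le> 2 \<integral>\<^sub>A |f| \<le> 2 K \<lambda>(A)\<close>. Altogether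
  \<open>K \<le> 2 \<Sum>\<^sub>N |c\<^sub>n| L\<^sub>n \<le> 4 K \<lambda>(A) \<Sum>\<^sub>N L\<^sub>n\<^sup>2\<close> with \<open>K > 0\<close>, which even gives the
  constant \<open>1/4\<close>. For the second bound, \<open>A\<close> lies a.e. in every ball \<open>B(pt, r)\<close>
  outside of which \<open>f \<ge> 0\<close>, and \<open>N \<subseteq> {..<k(s c)}\<close>.
\<close>

lemma linf_norm_e_nonneg:
  assumes "emeasure M (space M) \<noteq> 0"
  shows "linf_norm_e M g \<ge> 0"
proof -
  have "esssup M (\<lambda>x. 0::ereal) \<le> esssup M (\<lambda>x. ereal \<bar>g x\<bar>)"
    by (rule esssup_mono) auto
  moreover have "esssup M (\<lambda>x. 0::ereal) = 0"
    by (rule esssup_const[OF assms])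
  ultimately show ?thesis
    by (simp add: linf_norm_e_def)
qed

lemma linf_norm_nonneg:
  assumes "emeasure M (space M) \<noteq> 0"
  shows "linf_norm M g \<ge> 0"
  using linf_norm_e_nonneg[OF assms] by (simp add: linf_norm_def real_of_ereal_pos)

lemma AE_abs_le_linf_norm:
  assumes "emeasure M (space M) \<noteq> 0" and "linf_norm_e M g < \<infinity>"
  shows "AE x in M. \<bar>g x\<bar> \<le> linf_norm M g"
proof -
  have eq: "ereal (linf_norm M g) = linf_norm_e M g"
    using linf_norm_e_nonneg[OF assms(1)] assms(2)
    by (cases "linf_norm_e M g") (auto simp: linf_norm_def)
  have "AE x in M. ereal \<bar>g x\<bar> \<le> linf_norm_e M g"
    unfolding linf_norm_e_def by (rule esssup_AE)
  then show ?thesis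
    by eventually_elim (simp add: eq[symmetric])
qed

lemma
  assumes "admissible M \<phi> pt"
  shows admissible_prob_space: "prob_space M"
    and admissible_ONB: "ONB M \<phi>"
    and admissible_measurable: "\<phi> n \<in> borel_measurable M"
    and admissible_linf_norm_nonneg: "linf_norm M (\<phi> n) \<ge> 0"
    and admissible_AE_abs_le: "AE x in M. \<bar>\<phi> n x\<bar> \<le> linf_norm M (\<phi> n)"
    and admissible_val_at: "val_at M pt (\<phi> n) = linf_norm M (\<phi> n)"
proof -
  show P: "prob_space M" and "ONB M \<phi>" and "\<phi> n \<in> borel_measurable M"
    using assms by (auto simp: admissible_def ONB_def L2_def)
  have "emeasure M (space M) \<noteq> 0"
    using P by (simp add: prob_space.emeasure_space_1)
  moreover have "linf_norm_e M (\<phi> n) < \<infinity>"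
    using assms by (simp add: admissible_def)
  ultimately show "linf_norm M (\<phi> n) \<ge> 0" "AE x in M. \<bar>\<phi> n x\<bar> \<le> linf_norm M (\<phi> n)"
    by (auto intro: linf_norm_nonneg AE_abs_le_linf_norm)
  have "(ball_avg M pt (\<phi> n) \<longlongrightarrow> linf_norm M (\<phi> n)) (at_right 0)"
    using assms by (simp add: admissible_def)
  then show "val_at M pt (\<phi> n) = linf_norm M (\<phi> n)"
    unfolding val_at_def by (intro tendsto_Lim) auto
qed

lemma admissible_fcoef_0:
  assumes "admissible M \<phi> pt" and "f \<in> borel_measurable M"
  shows "fcoef M \<phi> f 0 = (\<integral>x. f x \<partial>M)"
proof -
  have [measurable]: "\<phi> 0 \<in> borel_measurable M" "f \<in> borel_measurable M"
    using assms admissible_measurable by auto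
  have "AE x in M. \<phi> 0 x = 1"
    using assms by (simp add: admissible_def)
  then show ?thesis
    unfolding fcoef_def by (intro integral_cong_AE) (measurable, auto elim!: eventually_mono)
qed

lemma AE_abs_le_of_L2_approximation:
  fixes f :: "'a \<Rightarrow> real" and g :: "nat \<Rightarrow> 'a \<Rightarrow> real"
  assumes "finite_measure M"
    and [measurable]: "f \<in> borel_measurable M" "\<And>N. g N \<in> borel_measurable M"
    and f2: "integrable M (\<lambda>x. (f x)\<^sup>2)"
    and "K \<ge> 0" and g_bound: "\<And>N. AE x in M. \<bar>g N x\<bar> \<le> K"
    and lim: "(\<lambda>N. \<integral>x. (f x - g N x)\<^sup>2 \<partial>M) \<longlonglongrightarrow> 0"
  shows "AE x in M. \<bar>f x\<bar> \<le> K"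
proof -
  interpret finite_measure M by fact
  define h where "h x = max (\<bar>f x\<bar> - K) 0" for x
  have h2: "integrable M (\<lambda>x. (h x)\<^sup>2)"
  proof (rule Bochner_Integration.integrable_bound[OF f2])
    show "AE x in M. norm ((h x)\<^sup>2) \<le> norm ((f x)\<^sup>2)"
      using \<open>K \<ge> 0\<close> by (intro AE_I2) (simp add: h_def abs_le_square_iff[symmetric])
  qed (simp add: h_def)
  have h2_le: "(\<integral>x. (h x)\<^sup>2 \<partial>M) \<le> (\<integral>x. (f x - g N x)\<^sup>2 \<partial>M)" for N
  proof (rule integral_mono_AE[OF h2])
    have "AE x in M. norm ((f x - g N x)\<^sup>2) \<le> norm (2 * (f x)\<^sup>2 + 2 * K\<^sup>2)"
      using g_bound[of N]
    proof eventually_elim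
      case (elim x)
      then have "(g N x)\<^sup>2 \<le> K\<^sup>2"
        using \<open>K \<ge> 0\<close> by (metis abs_le_square_iff abs_of_nonneg)
      then show ?case
        by simp (smt (verit) power2_diff power2_sum zero_le_power2)
    qed
    from Bochner_Integration.integrable_bound[OF _ _ this]
    show "integrable M (\<lambda>x. (f x - g N x)\<^sup>2)"
      using f2 by simp
    show "AE x in M. (h x)\<^sup>2 \<le> (f x - g N x)\<^sup>2"
      using g_bound[of N]
    proof eventually_elim
      case (elim x)
      then have "\<bar>h x\<bar> \<le> \<bar>f x - g N x\<bar>"
        by (auto simp: h_def)
      then show ?case
        by (simp add: abs_le_square_iff)
    qed
  qed
  have "(\<integral>x. (h x)\<^sup>2 \<partial>M) = 0"
    using LIMSEQ_le_const[OF lim] h2_le by (intro antisym) auto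
  then have "AE x in M. (h x)\<^sup>2 = 0"
    using integral_nonneg_eq_0_iff_AE[OF h2] by simp
  then show ?thesis
    by eventually_elim (auto simp: h_def)
qed

lemma AE_abs_le_sum_abs_fcoef:
  assumes "finite_measure M" and ONB: "ONB M \<phi>" and "f \<in> L2 M"
    and \<phi>_bound: "\<And>n. AE x in M. \<bar>\<phi> n x\<bar> \<le> L n" and L_nonneg: "\<And>n. L n \<ge> 0"
    and summable: "summable (\<lambda>n. \<bar>fcoef M \<phi> f n\<bar> * L n)"
  shows "AE x in M. \<bar>f x\<bar> \<le> (\<Sum>n. \<bar>fcoef M \<phi> f n\<bar> * L n)"
proof -
  let ?c = "fcoef M \<phi> f" and ?K = "\<Sum>n. \<bar>fcoef M \<phi> f n\<bar> * L n"
  have [measurable]: "\<phi> n \<in> borel_measurable M" for n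
    using ONB by (simp add: ONB_def L2_def)
  have partial_sum_bound: "AE x in M. \<bar>\<Sum>n<N. ?c n * \<phi> n x\<bar> \<le> ?K" for N
  proof -
    have "AE x in M. \<forall>n. \<bar>\<phi> n x\<bar> \<le> L n"
      using \<phi>_bound by (simp add: AE_all_countable)
    then show ?thesis
    proof eventually_elim
      case (elim x)
      have "\<bar>\<Sum>n<N. ?c n * \<phi> n x\<bar> \<le> (\<Sum>n<N. \<bar>?c n\<bar> * L n)"
        using elim by (intro order_trans[OF sum_abs] sum_mono) (simp add: abs_mult mult_left_mono)
      also have "\<dots> \<le> ?K"
        using summable L_nonneg by (intro sum_le_suminf) auto
      finally show ?case .
    qed
  qed
  show ?thesis
  proof (rule AE_abs_le_of_L2_approximation[OF \<open>finite_measure M\<close> _ _ _ _ partial_sum_bound])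
    show "?K \<ge> 0"
      using summable L_nonneg by (intro suminf_nonneg) auto
    show "(\<lambda>N. \<integral>x. (f x - (\<Sum>n<N. ?c n * \<phi> n x))\<^sup>2 \<partial>M) \<longlonglongrightarrow> 0"
      using ONB \<open>f \<in> L2 M\<close> by (simp add: ONB_def)
  qed (use \<open>f \<in> L2 M\<close> in \<open>simp_all add: L2_def\<close>)
qed

lemma abs_fcoef_le:
  assumes "integrable M f" and [measurable]: "\<phi> n \<in> borel_measurable M"
    and \<phi>_bound: "AE x in M. \<bar>\<phi> n x\<bar> \<le> L"
  shows "\<bar>fcoef M \<phi> f n\<bar> \<le> (\<integral>x. \<bar>f x\<bar> \<partial>M) * L"
proof -
  have bound: "AE x in M. norm (f x * \<phi> n x) \<le> \<bar>f x\<bar> * L"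
    using \<phi>_bound by eventually_elim (simp add: abs_mult mult_left_mono)
  have majorant: "integrable M (\<lambda>x. \<bar>f x\<bar> * L)"
    using assms(1) by auto
  have "integrable M (\<lambda>x. f x * \<phi> n x)"
    by (rule Bochner_Integration.integrable_bound[OF majorant])
      (use assms(1) bound in \<open>auto elim!: eventually_mono\<close>)
  then have "\<bar>fcoef M \<phi> f n\<bar> \<le> (\<integral>x. norm (f x * \<phi> n x) \<partial>M)"
    unfolding fcoef_def using integral_norm_bound[of M "\<lambda>x. f x * \<phi> n x"] by simp
  also have "\<dots> \<le> (\<integral>x. \<bar>f x\<bar> * L \<partial>M)"
    using \<open>integrable M (\<lambda>x. f x * \<phi> n x)\<close>
    by (intro integral_mono_AE[OF _ majorant bound]) auto
  finally show ?thesis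
    by simp
qed

lemma integral_abs_le_of_integral_nonpos:
  fixes f :: "'a \<Rightarrow> real"
  assumes "finite_measure M" and f: "integrable M f"
    and "(\<integral>x. f x \<partial>M) \<le> 0" and f_bound: "AE x in M. \<bar>f x\<bar> \<le> K"
  shows "(\<integral>x. \<bar>f x\<bar> \<partial>M) \<le> 2 * K * measure M {x \<in> space M. f x < 0}"
proof -
  interpret finite_measure M by fact
  define A where "A = {x \<in> space M. f x < 0}"
  have [measurable]: "A \<in> sets M"
    using f unfolding A_def by measurable
  have neg: "integrable M (\<lambda>x. max (- f x) 0)"
    using f by auto
  have "(\<integral>x. \<bar>f x\<bar> \<partial>M) = (\<integral>x. f x + 2 * max (- f x) 0 \<partial>M)"
    by (intro Bochner_Integration.integral_cong) auto
  also have "\<dots> = (\<integral>x. f x \<partial>M) + 2 * (\<integral>x. max (- f x) 0 \<partial>M)"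
    using f neg by simp
  also have "\<dots> \<le> 2 * (\<integral>x. K * indicator A x \<partial>M)"
  proof -
    have "(\<integral>x. max (- f x) 0 \<partial>M) \<le> (\<integral>x. K * indicator A x \<partial>M)"
    proof (rule integral_mono_AE[OF neg])
      show "integrable M (\<lambda>x. K * indicator A x)"
        by (simp add: integrable_indicator_iff emeasure_eq_measure)
      show "AE x in M. max (- f x) 0 \<le> K * indicator A x"
        using f_bound AE_space by eventually_elim (auto simp: A_def indicator_def)
    qed
    then show ?thesis
      using assms(3) by linarith
  qed
  also have "\<dots> = 2 * K * measure M A"
    by (simp add: Int_absorb2 sets.sets_into_space)
  finally show ?thesis
    by (simp add: A_def)
qed

lemma suminf_abs_le_twice_sum_negative:
  fixes b :: "nat \<Rightarrow> real"
  assumes summable: "summable (\<lambda>n. \<bar>b n\<bar>)" and "suminf b \<le> 0"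
    and "finite N" and nonneg: "\<And>n. n \<notin> N \<Longrightarrow> b n \<ge> 0"
  shows "(\<Sum>n. \<bar>b n\<bar>) \<le> 2 * (\<Sum>n\<in>N. \<bar>b n\<bar>)"
proof -
  define g where "g n = (if n \<in> N then \<bar>b n\<bar> else 0)" for n
  have g: "g sums (\<Sum>n\<in>N. \<bar>b n\<bar>)"
    unfolding g_def using \<open>finite N\<close> by (rule sums_If_finite_set)
  have "(\<Sum>n. \<bar>b n\<bar>) \<le> (\<Sum>n. b n + 2 * g n)"
    using nonneg summable_rabs_cancel[OF summable] g
    by (intro suminf_le summable_add summable_mult sums_summable[OF g] summable)
      (auto simp: g_def)
  also have "\<dots> = suminf b + 2 * (\<Sum>n\<in>N. \<bar>b n\<bar>)"
    using summable_rabs_cancel[OF summable] g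
    by (subst suminf_add[symmetric]) (auto simp: suminf_mult sums_summable sums_unique[symmetric])
  finally show ?thesis
    using assms(2) by linarith
qed

lemma negative_indices_subset_k_idx:
  assumes "\<forall>\<^sub>F n in sequentially. a n \<ge> 0"
  shows "{n. a n < 0} \<subseteq> {..<k_idx a}"
proof -
  obtain n0 where "\<And>n. n \<ge> n0 \<Longrightarrow> a n \<ge> 0"
    using assms by (auto simp: eventually_sequentially)
  then have "Suc n0 \<ge> 1 \<and> (\<forall>n\<ge>Suc n0. a n \<ge> 0)"
    by auto
  then have "\<forall>n\<ge>k_idx a. a n \<ge> 0"
    unfolding k_idx_def by (rule LeastI2_ex[OF exI]) auto
  then show ?thesis
    by (auto simp: not_le[symmetric])
qed

lemma A_s_finite_negative_coefficients:
  assumes "f \<in> A_s s M \<phi> pt"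
  shows "finite {n. s * fcoef M \<phi> f n < 0}"
  using negative_indices_subset_k_idx[of "\<lambda>n. s * fcoef M \<phi> f n"] assms
  by (auto simp: A_s_def intro: finite_subset)

lemma A_s_sum_le_twice_negative:
  assumes s: "s = 1 \<or> s = -1" and adm: "admissible M \<phi> pt" and fA: "f \<in> A_s s M \<phi> pt"
  shows "(\<Sum>n. \<bar>fcoef M \<phi> f n\<bar> * linf_norm M (\<phi> n))
           \<le> 2 * (\<Sum>n\<in>{n. s * fcoef M \<phi> f n < 0}. \<bar>fcoef M \<phi> f n\<bar> * linf_norm M (\<phi> n))"
proof -
  define c where "c = fcoef M \<phi> f"
  define L where "L n = linf_norm M (\<phi> n)" for n
  have L_nonneg: "L n \<ge> 0" for n
    using adm by (simp add: L_def admissible_linf_norm_nonneg)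
  have summable: "summable (\<lambda>n. \<bar>c n\<bar> * L n)" and sign_at_pt: "s * (\<Sum>n. c n * L n) \<le> 0"
    using fA adm by (auto simp: A_s_def c_def L_def fval_o_def admissible_val_at)
  have abs_b: "\<bar>s * (c n * L n)\<bar> = \<bar>c n\<bar> * L n" for n
    using s L_nonneg[of n] by (auto simp: abs_mult)
  have "(\<Sum>n. \<bar>s * (c n * L n)\<bar>) \<le> 2 * (\<Sum>n\<in>{n. s * c n < 0}. \<bar>s * (c n * L n)\<bar>)"
  proof (rule suminf_abs_le_twice_sum_negative)
    show "summable (\<lambda>n. \<bar>s * (c n * L n)\<bar>)"
      using summable by (simp only: abs_b)
    show "(\<Sum>n. s * (c n * L n)) \<le> 0"
      using sign_at_pt summable_rabs_cancel[of "\<lambda>n. c n * L n"] summable L_nonneg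
      by (simp add: suminf_mult abs_mult)
    show "finite {n. s * c n < 0}"
      using A_s_finite_negative_coefficients[OF fA] by (simp add: c_def)
    show "s * (c n * L n) \<ge> 0" if "n \<notin> {n. s * c n < 0}" for n
      using that L_nonneg[of n] by (simp add: mult.assoc[symmetric])
  qed
  then show ?thesis
    unfolding abs_b by (simp add: c_def L_def)
qed

theorem A_s_uncertainty_quarter:
  assumes s: "s = 1 \<or> s = -1" and adm: "admissible M \<phi> pt"
    and fA: "f \<in> A_s s M \<phi> pt" and nonzero: "\<not> (AE x in M. f x = 0)"
  shows "measure M {x \<in> space M. f x < 0}
           * (\<Sum>n\<in>{n. s * fcoef M \<phi> f n < 0}. (linf_norm M (\<phi> n))\<^sup>2) \<ge> 1/4"
proof -
  interpret prob_space M
    using adm by (rule admissible_prob_space)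
  define c where "c = fcoef M \<phi> f"
  define L where "L n = linf_norm M (\<phi> n)" for n
  define K where "K = (\<Sum>n. \<bar>c n\<bar> * L n)"
  define N where "N = {n. s * c n < 0}"
  define m where "m = measure M {x \<in> space M. f x < 0}"
  define S where "S = (\<Sum>n\<in>N. (L n)\<^sup>2)"
  define I where "I = (\<integral>x. \<bar>f x\<bar> \<partial>M)"
  have L_nonneg: "L n \<ge> 0" for n
    using adm by (simp add: L_def admissible_linf_norm_nonneg)
  have fL2: "f \<in> L2 M" and summable: "summable (\<lambda>n. \<bar>c n\<bar> * L n)" and "c 0 \<le> 0"
    using fA by (auto simp: A_s_def c_def L_def)
  have f: "integrable M f"
    using fL2 by (auto simp: L2_def intro: square_integrable_imp_integrable)
  have f_bound: "AE x in M. \<bar>f x\<bar> \<le> K"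
    unfolding K_def c_def
    using adm summable L_nonneg
    by (intro AE_abs_le_sum_abs_fcoef[OF finite_measure_axioms _ fL2])
      (auto simp: c_def L_def admissible_ONB admissible_AE_abs_le)
  have "I \<le> 2 * K * m"
    using integral_abs_le_of_integral_nonpos[OF finite_measure_axioms f _ f_bound]
      admissible_fcoef_0[OF adm borel_measurable_integrable[OF f]] \<open>c 0 \<le> 0\<close>
    by (simp add: I_def m_def c_def)
  have coef_bound: "\<bar>c n\<bar> \<le> I * L n" for n
    using abs_fcoef_le[where \<phi> = \<phi> and n = n, OF f admissible_measurable[OF adm]
        admissible_AE_abs_le[OF adm]]
    by (simp add: c_def I_def L_def)
  have "K \<le> 2 * (\<Sum>n\<in>N. \<bar>c n\<bar> * L n)"
    using A_s_sum_le_twice_negative[OF s adm fA] by (simp add: K_def N_def c_def L_def)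
  also have "\<dots> \<le> 2 * (\<Sum>n\<in>N. I * L n * L n)"
    using coef_bound L_nonneg by (intro mult_left_mono sum_mono mult_right_mono) auto
  also have "\<dots> = 2 * I * S"
    by (simp add: S_def sum_distrib_left power2_eq_square mult.assoc)
  also have "\<dots> \<le> 4 * K * m * S"
    using \<open>I \<le> 2 * K * m\<close> by (intro mult_right_mono) (auto simp: S_def sum_nonneg)
  finally have "K \<le> 4 * K * m * S" .
  moreover have "K > 0"
  proof (rule ccontr)
    assume "\<not> K > 0"
    from f_bound have "AE x in M. f x = 0"
      by eventually_elim (use \<open>\<not> K > 0\<close> in auto)
    with nonzero show False ..
  qed
  ultimately show ?thesis
    by (simp add: m_def S_def N_def c_def L_def field_simps)
qed

lemma Rset_nonneg:
  assumes "r \<in> Rset M pt"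
  shows "r \<ge> 0"
proof -
  from assms obtain r0 where "r0 \<ge> 0"
    and r: "r = Inf {r'. r' \<ge> 0 \<and> measure M (cball pt r') = measure M (cball pt r0)}"
    by (auto simp: Rset_def)
  show ?thesis
    unfolding r by (rule cInf_greatest) (use \<open>r0 \<ge> 0\<close> in auto)
qed

lemma measure_cball_Inf_ge:
  assumes "finite_measure M" and cball_sets: "\<And>r. cball p r \<in> sets M"
    and "R \<noteq> {}" and ge: "\<And>r. r \<in> R \<Longrightarrow> a \<le> measure M (cball p r)"
  shows "a \<le> measure M (cball p (Inf R))"
proof -
  interpret finite_measure M by fact
  define B where "B k = cball p (Inf R + inverse (Suc k))" for k :: nat
  have B_ge: "a \<le> measure M (B k)" for k
  proof -
    obtain r where r: "r \<in> R" "r < Inf R + inverse (Suc k)"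
      using cInf_lessD[OF \<open>R \<noteq> {}\<close>, of "Inf R + inverse (Suc k)"] by auto
    have "a \<le> measure M (cball p r)"
      using r(1) by (rule ge)
    also have "\<dots> \<le> measure M (B k)"
      unfolding B_def using r(2) by (intro finite_measure_mono subset_cball cball_sets) simp
    finally show ?thesis .
  qed
  have "decseq B"
    unfolding decseq_def B_def
    by (intro allI impI subset_cball add_left_mono le_imp_inverse_le) auto
  moreover have "(\<Inter>k. B k) = cball p (Inf R)"
  proof (intro equalityI subsetI)
    fix x assume "x \<in> (\<Inter>k. B k)"
    then have "dist p x \<le> Inf R + inverse (Suc k)" for k
      by (auto simp: B_def)
    then have "dist p x \<le> Inf R + 0"
      by (intro LIMSEQ_le_const[OF tendsto_add[OF tendsto_const LIMSEQ_inverse_real_of_nat]]) auto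
    then show "x \<in> cball p (Inf R)"
      by simp
  qed (auto simp: B_def intro: add_increasing2)
  ultimately have "(\<lambda>k. measure M (B k)) \<longlonglongrightarrow> measure M (cball p (Inf R))"
    using finite_Lim_measure_decseq[of B] cball_sets by (auto simp: B_def)
  then show ?thesis
    by (rule LIMSEQ_le_const) (use B_ge in auto)
qed

lemma measure_negative_le_ball_meas_r_f:
  assumes "finite_measure M" and cball_sets: "\<And>r. cball pt r \<in> sets M"
    and [measurable]: "f \<in> borel_measurable M"
  shows "measure M {x \<in> space M. f x < 0} \<le> ball_meas M pt (r_f M pt f)"
proof -
  interpret finite_measure M by fact
  define A where "A = {x \<in> space M. f x < 0}"
  define R where "R = {r. r \<in> Rset M pt \<and> (AE x in M. dist x pt \<ge> r \<longrightarrow> f x \<ge> 0)}"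
  have r_f: "r_f M pt f = Inf (ereal ` R)"
    unfolding r_f_def R_def by (rule arg_cong[where f = Inf]) auto
  show ?thesis
  proof (cases "R = {}")
    case True
    then show ?thesis
      by (simp add: r_f ball_meas_def bounded_measure top_ereal_def)
  next
    case False
    have "bdd_below R"
      by (rule bdd_belowI[of _ 0]) (auto simp: R_def intro: Rset_nonneg)
    then have "r_f M pt f = ereal (Inf R)"
      using ereal_Inf'[OF _ False] by (simp add: r_f)
    moreover have "measure M A \<le> measure M (cball pt r)" if "r \<in> R" for r
    proof (rule finite_measure_mono_AE[OF _ cball_sets])
      show "AE x in M. x \<in> A \<longrightarrow> x \<in> cball pt r"
        using that by (auto simp: R_def A_def dist_commute elim!: eventually_mono)
    qed
    ultimately show ?thesis
      using measure_cball_Inf_ge[OF finite_measure_axioms cball_sets False]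
      by (simp add: ball_meas_def A_def)
  qed
qed

theorem mainTheorem2:
  fixes M :: "'a::metric_space measure" and \<phi> :: "nat \<Rightarrow> 'a \<Rightarrow> real"
    and pt :: 'a and s :: real and f :: "'a \<Rightarrow> real"
  assumes "s = 1 \<or> s = -1"
    and "admissible M \<phi> pt"
    and "f \<in> A_s s M \<phi> pt"
    and "\<not> (AE x in M. f x = 0)"
  shows "measure M {x \<in> space M. f x < 0}
           * (\<Sum>n\<in>{n. s * fcoef M \<phi> f n < 0}. (linf_norm M (\<phi> n))\<^sup>2) \<ge> 1/16
       \<and> ball_meas M pt (r_f M pt f)
           * (\<Sum>n<k_idx (\<lambda>n. s * fcoef M \<phi> f n). (linf_norm M (\<phi> n))\<^sup>2) \<ge> 1/16"
proof -
  let ?m = "measure M {x \<in> space M. f x < 0}" and ?a = "\<lambda>n. s * fcoef M \<phi> f n"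
    and ?L2 = "\<lambda>n. (linf_norm M (\<phi> n))\<^sup>2"
  have quarter: "?m * (\<Sum>n\<in>{n. ?a n < 0}. ?L2 n) \<ge> 1/4"
    by (rule A_s_uncertainty_quarter[OF assms])
  interpret prob_space M
    using assms(2) by (rule admissible_prob_space)
  have "?m \<le> ball_meas M pt (r_f M pt f)"
    using assms(2,3) by (intro measure_negative_le_ball_meas_r_f finite_measure_axioms)
      (auto simp: admissible_def A_s_def L2_def)
  moreover have "(\<Sum>n\<in>{n. ?a n < 0}. ?L2 n) \<le> (\<Sum>n<k_idx ?a. ?L2 n)"
    using negative_indices_subset_k_idx[of ?a] assms(3) by (intro sum_mono2) (auto simp: A_s_def)
  ultimately have "?m * (\<Sum>n\<in>{n. ?a n < 0}. ?L2 n)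
      \<le> ball_meas M pt (r_f M pt f) * (\<Sum>n<k_idx ?a. ?L2 n)"
    by (intro mult_mono') (auto intro: sum_nonneg)
  with quarter show ?thesis
    by simp
qed

end
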